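(* Let $(A,+,\cdot)$ be a left brace with $A^{(3)}=\{0\}$ and let $a\in A$. For $i\in\mathbb{Z}$ let $a_i=\lambda_{a^i}(a)=-a^i+a^{i+1}$ (where $a^i$ is the $i$-th power of $a$ in $(A,\cdot)$; so $a_0=a$). Then the set \[B=\Bigl\{\sum_{i\in\mathbb{Z}}x_ia_i\;\Big|\; x_i\in\mathbb{Z}\text{ for all } i,\ \{i\mid x_i\neq0\}\text{ finite}\Bigr\}\] is the subbrace of $A$ generated by $a$. Moreover, if $D=\{\sum_{i\in\mathbb{Z}}x_ia_i\in B\mid \sum_{i\in\mathbb{Z}}x_i=0\}$ (sums over finitely supported integer families), then $B*B=D$.
   Context: A left brace $(A,+,\cdot)$ is a set $A$ with two binary operations such that $(A,+)$ is an abelian group, $(A,\cdot)$ is a group, and $a(b+c)=ab-a+ac$ for all $a,b,c\in A$. For $a,b\in A$ set $\lambda_a(b)=-a+ab$ and $a*b=-a+ab-b=\lambda_a(b)-b$. For subsets $L,M\subseteq A$, $L*M$ is the subgroup of $(A,+)$ generated by $\{l*m\mid l\in L,m\in M\}$. Set $A^{(1)}=A$ and $A^{(r+1)}=A^{(r)}*A$ for $r\ge1$. A subbrace of $A$ is a subset that is a subgroup of both $(A,+)$ and $(A,\cdot)$; the subbrace generated by $a$ is the intersection of all subbraces containing $a$. *)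

theory Defs
  imports "HOL-Algebra.Algebra"
begin

text \<open>A left brace: an additive abelian group G (written with the monoid record of
HOL-Algebra, so "+" is the operation of G, "0" is its unit and "-a" is its inverse)
and a multiplicative group M on the same carrier, satisfying
a(b+c) = ab - a + ac.\<close>

definition left_brace :: "('a, 'b) monoid_scheme \<Rightarrow> ('a, 'c) monoid_scheme \<Rightarrow> bool" where
  "left_brace G M \<longleftrightarrow> comm_group G \<and> group M \<and> carrier M = carrier G \<and>
     (\<forall>a\<in>carrier G. \<forall>b\<in>carrier G. \<forall>c\<in>carrier G.
        a \<otimes>\<^bsub>M\<^esub> (b \<otimes>\<^bsub>G\<^esub> c)
        = (a \<otimes>\<^bsub>M\<^esub> b) \<otimes>\<^bsub>G\<^esub> inv\<^bsub>G\<^esub> a \<otimes>\<^bsub>G\<^esub> (a \<otimes>\<^bsub>M\<^esub> c))"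

definition brace_lambda :: "('a, 'b) monoid_scheme \<Rightarrow> ('a, 'c) monoid_scheme \<Rightarrow> 'a \<Rightarrow> 'a \<Rightarrow> 'a" where
  "brace_lambda G M a b = inv\<^bsub>G\<^esub> a \<otimes>\<^bsub>G\<^esub> (a \<otimes>\<^bsub>M\<^esub> b)"

definition brace_star :: "('a, 'b) monoid_scheme \<Rightarrow> ('a, 'c) monoid_scheme \<Rightarrow> 'a \<Rightarrow> 'a \<Rightarrow> 'a" where
  "brace_star G M a b = brace_lambda G M a b \<otimes>\<^bsub>G\<^esub> inv\<^bsub>G\<^esub> b"

definition brace_star_set :: "('a, 'b) monoid_scheme \<Rightarrow> ('a, 'c) monoid_scheme \<Rightarrow> 'a set \<Rightarrow> 'a set \<Rightarrow> 'a set" where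
  "brace_star_set G M L K = generate G {brace_star G M l k | l k. l \<in> L \<and> k \<in> K}"

text \<open>brace_series G M r = A^(r) for r >= 1 (A^(1) = A, A^(r+1) = A^(r) * A);
  the value at r = 0 is an irrelevant convention (A).\<close>
fun brace_series :: "('a, 'b) monoid_scheme \<Rightarrow> ('a, 'c) monoid_scheme \<Rightarrow> nat \<Rightarrow> 'a set" where
  "brace_series G M 0 = carrier G"
| "brace_series G M (Suc 0) = carrier G"
| "brace_series G M (Suc (Suc r)) = brace_star_set G M (brace_series G M (Suc r)) (carrier G)"

definition subbrace :: "('a, 'b) monoid_scheme \<Rightarrow> ('a, 'c) monoid_scheme \<Rightarrow> 'a set \<Rightarrow> bool" where
  "subbrace G M S \<longleftrightarrow> subgroup S G \<and> subgroup S M"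

definition subbrace_generated :: "('a, 'b) monoid_scheme \<Rightarrow> ('a, 'c) monoid_scheme \<Rightarrow> 'a \<Rightarrow> 'a set" where
  "subbrace_generated G M a = \<Inter>{S. subbrace G M S \<and> a \<in> S}"

end

theory Submission
  imports Defs
begin

text \<open>Since A^(3) = 0, every lambda_k with k in A^(2) = A * A is the identity. As
uv = u + v + u * v, lambda is then a homomorphism into the permutations of A not only from
(A, \<cdot>) but also from (A, +), so lambda_{a^n} = lambda_{na}. Since a_i = a + a^i * a, the element
sum x_i a_i acts as lambda_{a^s} with s = sum x_i, i.e. by the index shift a_i \<mapsto> a_{i+s}.
Hence the integer span B of the a_i is closed under multiplication and inversion, and
u * v = lambda_u(v) - v has coefficient sum 0 for u, v in B; conversely an element of B with
coefficient sum 0 equals sum x_i (a^i * a).\<close>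

section \<open>Finitely supported integer combinations\<close>

definition lincomb :: "('a, 'b) monoid_scheme \<Rightarrow> ('i \<Rightarrow> 'a) \<Rightarrow> ('i \<Rightarrow> int) \<Rightarrow> 'a" where
  "lincomb G f x = finprod G (\<lambda>i. f i [^]\<^bsub>G\<^esub> x i) {i. x i \<noteq> 0}"

definition int_span :: "('a, 'b) monoid_scheme \<Rightarrow> ('i \<Rightarrow> 'a) \<Rightarrow> 'a set" where
  "int_span G f = {lincomb G f x | x. finite {i. x i \<noteq> 0}}"

definition coeff_sum :: "('i \<Rightarrow> int) \<Rightarrow> int" where
  "coeff_sum x = (\<Sum>i\<in>{i. x i \<noteq> 0}. x i)"

definition zero_sum_span :: "('a, 'b) monoid_scheme \<Rightarrow> ('i \<Rightarrow> 'a) \<Rightarrow> 'a set" where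
  "zero_sum_span G f = {lincomb G f x | x. finite {i. x i \<noteq> 0} \<and> coeff_sum x = 0}"

lemma finite_support_add:
  assumes "finite {i. x i \<noteq> 0}" "finite {i. y i \<noteq> 0}"
  shows "finite {i. x i + y i \<noteq> (0::int)}"
proof (rule finite_subset)
  show "{i. x i + y i \<noteq> 0} \<subseteq> {i. x i \<noteq> 0} \<union> {i. y i \<noteq> 0}" by auto
qed (use assms in simp)

lemma support_shift:
  fixes x :: "'i::ab_group_add \<Rightarrow> int"
  shows "{j. x (j - n) \<noteq> 0} = (\<lambda>i. n + i) ` {i. x i \<noteq> 0}"
  by (auto simp: image_iff algebra_simps intro!: exI[of _ "_ - n"])

lemma finite_support_shift:
  fixes x :: "'i::ab_group_add \<Rightarrow> int"
  shows "finite {i. x i \<noteq> 0} \<Longrightarrow> finite {j. x (j - n) \<noteq> 0}"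
  by (simp add: support_shift)

lemma coeff_sum_superset:
  "finite F \<Longrightarrow> {i. x i \<noteq> 0} \<subseteq> F \<Longrightarrow> coeff_sum x = (\<Sum>i\<in>F. x i)"
  unfolding coeff_sum_def by (rule sum.mono_neutral_left) auto

lemma coeff_sum_add:
  assumes "finite {i. x i \<noteq> 0}" "finite {i. y i \<noteq> 0}"
  shows "coeff_sum (\<lambda>i. x i + y i) = coeff_sum x + coeff_sum y"
proof -
  let ?F = "{i. x i \<noteq> 0} \<union> {i. y i \<noteq> 0}"
  have F: "finite ?F" using assms by simp
  have "coeff_sum (\<lambda>i. x i + y i) = (\<Sum>i\<in>?F. x i + y i)"
    by (rule coeff_sum_superset[OF F]) auto
  also have "\<dots> = coeff_sum x + coeff_sum y"
    by (simp add: sum.distrib coeff_sum_superset[OF F])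
  finally show ?thesis .
qed

lemma coeff_sum_neg: "coeff_sum (\<lambda>i. - x i) = - coeff_sum x"
  by (simp add: coeff_sum_def sum_negf)

lemma coeff_sum_shift:
  fixes x :: "'i::ab_group_add \<Rightarrow> int"
  shows "coeff_sum (\<lambda>j. x (j - n)) = coeff_sum x"
  unfolding coeff_sum_def support_shift by (subst sum.reindex) (auto simp: inj_on_def)

context comm_group
begin

lemma finprod_in_subgroup:
  assumes "subgroup H G" and "\<And>i. i \<in> F \<Longrightarrow> f i \<in> H"
  shows "finprod G f F \<in> H"
  using assms(2)
proof (induction F rule: infinite_finite_induct)
  case (insert i F)
  have "f \<in> F \<rightarrow> carrier G" "f i \<in> carrier G"
    using insert.prems subgroup.subset[OF assms(1)] by auto
  then show ?case using insert by (simp add: subgroup.m_closed[OF assms(1)])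
qed (use assms(1) subgroup.one_closed in auto)

lemma finprod_int_pow_eq_int_pow_sum:
  assumes "a \<in> carrier G" and "finite F"
  shows "finprod G (\<lambda>i. a [^] (x i :: int)) F = a [^] (\<Sum>i\<in>F. x i)"
  using assms(2) by (induction F rule: finite_induct) (auto simp: assms(1) int_pow_mult Pi_def)

lemma lincomb_closed [simp]: "(\<And>i. f i \<in> carrier G) \<Longrightarrow> lincomb G f x \<in> carrier G"
  unfolding lincomb_def by (rule finprod_closed) (use int_pow_closed in auto)

lemma lincomb_superset:
  assumes "finite F" "{i. x i \<noteq> 0} \<subseteq> F" "\<And>i. f i \<in> carrier G"
  shows "lincomb G f x = finprod G (\<lambda>i. f i [^] x i) F"
  unfolding lincomb_def by (rule finprod_mono_neutral_cong_left) (use assms in auto)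

lemma lincomb_in_subgroup:
  "subgroup H G \<Longrightarrow> (\<And>i. f i \<in> H) \<Longrightarrow> lincomb G f x \<in> H"
  unfolding lincomb_def by (intro finprod_in_subgroup subgroup_int_pow_closed)

lemma lincomb_add:
  assumes "finite {i. x i \<noteq> 0}" "finite {i. y i \<noteq> 0}" "\<And>i. f i \<in> carrier G"
  shows "lincomb G f (\<lambda>i. x i + y i) = lincomb G f x \<otimes> lincomb G f y"
proof -
  let ?F = "{i. x i \<noteq> 0} \<union> {i. y i \<noteq> 0}"
  have F: "finite ?F" using assms by simp
  have "lincomb G f (\<lambda>i. x i + y i) = finprod G (\<lambda>i. f i [^] x i \<otimes> f i [^] y i) ?F"
    using assms(3) by (subst lincomb_superset[OF F]) (auto simp: int_pow_mult)
  also have "\<dots> = lincomb G f x \<otimes> lincomb G f y"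
    using assms(3) by (simp add: lincomb_superset[OF F] Pi_def)
  finally show ?thesis .
qed

lemma lincomb_zero [simp]: "lincomb G f (\<lambda>i. 0) = \<one>"
  by (simp add: lincomb_def)

lemma lincomb_neg:
  assumes "finite {i. x i \<noteq> 0}" "\<And>i. f i \<in> carrier G"
  shows "lincomb G f (\<lambda>i. - x i) = inv (lincomb G f x)"
proof -
  have "lincomb G f x \<otimes> lincomb G f (\<lambda>i. - x i) = \<one>"
    using lincomb_add[of x "\<lambda>i. - x i" f] assms by simp
  then show ?thesis
    using assms(2) by (metis inv_equality lincomb_closed m_comm)
qed

lemma lincomb_indicator [simp]:
  "f i \<in> carrier G \<Longrightarrow> lincomb G f (\<lambda>j. if j = i then 1 else 0) = f i"
  by (simp add: lincomb_def)

lemma lincomb_shift: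
  fixes f :: "'i::ab_group_add \<Rightarrow> 'a"
  assumes "\<And>i. f i \<in> carrier G"
  shows "lincomb G (\<lambda>i. f (n + i)) x = lincomb G f (\<lambda>j. x (j - n))"
  unfolding lincomb_def support_shift
  by (subst finprod_reindex) (auto simp: assms inj_on_def)

lemma lincomb_mult_family:
  assumes "\<And>i. f i \<in> carrier G" "\<And>i. g i \<in> carrier G"
  shows "lincomb G (\<lambda>i. f i \<otimes> g i) x = lincomb G f x \<otimes> lincomb G g x"
  unfolding lincomb_def using assms by (simp add: int_pow_distrib Pi_def)

lemma lincomb_const:
  "a \<in> carrier G \<Longrightarrow> finite {i. x i \<noteq> 0} \<Longrightarrow> lincomb G (\<lambda>i. a) x = a [^] coeff_sum x"
  by (simp add: lincomb_def coeff_sum_def finprod_int_pow_eq_int_pow_sum)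

lemma endomorphism_finprod:
  assumes "h \<in> hom G G" "f \<in> F \<rightarrow> carrier G"
  shows "h (finprod G f F) = finprod G (\<lambda>i. h (f i)) F"
  using assms(2)
proof (induction F rule: infinite_finite_induct)
  case (infinite F)
  then show ?case using hom_one[OF assms(1)] by simp
next
  case empty
  then show ?case using hom_one[OF assms(1)] by simp
next
  case (insert i F)
  have "(\<lambda>i. h (f i)) \<in> insert i F \<rightarrow> carrier G" using insert.prems assms(1) by (auto simp: hom_def)
  with insert show ?case using assms(1) by (simp add: hom_mult)
qed

lemma endomorphism_lincomb:
  assumes "h \<in> hom G G" "\<And>i. f i \<in> carrier G"
  shows "h (lincomb G f x) = lincomb G (\<lambda>i. h (f i)) x"
  unfolding lincomb_def using assms
  by (simp add: endomorphism_finprod hom_int_pow is_group Pi_def)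

lemma int_span_subgroup:
  assumes "\<And>i. f i \<in> carrier G"
  shows "subgroup (int_span G f) G"
proof
  show "int_span G f \<subseteq> carrier G" using assms by (auto simp: int_span_def)
  show "\<one> \<in> int_span G f" unfolding int_span_def
    by (rule CollectI, rule exI[of _ "\<lambda>i. 0"]) simp
next
  fix u v assume "u \<in> int_span G f" "v \<in> int_span G f"
  then obtain x y where x: "finite {i. x i \<noteq> 0}" "u = lincomb G f x"
    and y: "finite {i. y i \<noteq> 0}" "v = lincomb G f y"
    unfolding int_span_def by blast
  show "u \<otimes> v \<in> int_span G f" unfolding int_span_def
    using x y assms by (auto simp: lincomb_add intro!: exI[of _ "\<lambda>i. x i + y i"] finite_support_add)
  show "inv u \<in> int_span G f" unfolding int_span_def
    using x assms by (auto simp: lincomb_neg intro!: exI[of _ "\<lambda>i. - x i"])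
qed

lemma zero_sum_span_subgroup:
  assumes "\<And>i. f i \<in> carrier G"
  shows "subgroup (zero_sum_span G f) G"
proof
  show "zero_sum_span G f \<subseteq> carrier G" using assms by (auto simp: zero_sum_span_def)
  show "\<one> \<in> zero_sum_span G f" unfolding zero_sum_span_def
    by (rule CollectI, rule exI[of _ "\<lambda>i. 0"]) (simp add: coeff_sum_def)
next
  fix u v assume "u \<in> zero_sum_span G f" "v \<in> zero_sum_span G f"
  then obtain x y where x: "finite {i. x i \<noteq> 0}" "u = lincomb G f x" "coeff_sum x = 0"
    and y: "finite {i. y i \<noteq> 0}" "v = lincomb G f y" "coeff_sum y = 0"
    unfolding zero_sum_span_def by blast
  show "u \<otimes> v \<in> zero_sum_span G f" unfolding zero_sum_span_def
    using x y assms
    by (auto simp: lincomb_add coeff_sum_add intro!: exI[of _ "\<lambda>i. x i + y i"] finite_support_add)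
  show "inv u \<in> zero_sum_span G f" unfolding zero_sum_span_def
    using x assms by (auto simp: lincomb_neg coeff_sum_neg intro!: exI[of _ "\<lambda>i. - x i"])
qed

end

section \<open>Left braces\<close>

locale brace = G: comm_group G + M: group M
  for G :: "('a, 'b) monoid_scheme" (structure) and M :: "('a, 'c) monoid_scheme" +
  assumes carrier_M: "carrier M = carrier G"
    and left_distrib: "\<And>a b c. \<lbrakk>a \<in> carrier G; b \<in> carrier G; c \<in> carrier G\<rbrakk> \<Longrightarrow>
      a \<otimes>\<^bsub>M\<^esub> (b \<otimes> c) = (a \<otimes>\<^bsub>M\<^esub> b) \<otimes> inv a \<otimes> (a \<otimes>\<^bsub>M\<^esub> c)"

lemma left_brace_imp_brace: "left_brace G M \<Longrightarrow> brace G M"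
  unfolding left_brace_def brace_def brace_axioms_def comm_group_def by blast

context brace
begin

abbreviation lam where "lam \<equiv> brace_lambda G M"

lemma M_mult_closed [simp]: "x \<in> carrier G \<Longrightarrow> y \<in> carrier G \<Longrightarrow> x \<otimes>\<^bsub>M\<^esub> y \<in> carrier G"
  using M.m_closed carrier_M by auto

lemma M_inv_closed [simp]: "x \<in> carrier G \<Longrightarrow> inv\<^bsub>M\<^esub> x \<in> carrier G"
  using M.inv_closed carrier_M by auto

lemma M_int_pow_closed [simp]: "x \<in> carrier G \<Longrightarrow> x [^]\<^bsub>M\<^esub> (n::int) \<in> carrier G"
  using M.int_pow_closed carrier_M by auto

lemma lam_closed [simp]: "x \<in> carrier G \<Longrightarrow> b \<in> carrier G \<Longrightarrow> lam x b \<in> carrier G"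
  by (simp add: brace_lambda_def)

lemma M_mult_eq: "x \<in> carrier G \<Longrightarrow> b \<in> carrier G \<Longrightarrow> x \<otimes>\<^bsub>M\<^esub> b = x \<otimes> lam x b"
  by (simp add: brace_lambda_def G.m_assoc[symmetric])

lemma lam_hom: "x \<in> carrier G \<Longrightarrow> lam x \<in> hom G G"
  by (rule homI) (simp_all add: brace_lambda_def left_distrib G.m_assoc)

lemma lam_mult: "x \<in> carrier G \<Longrightarrow> b \<in> carrier G \<Longrightarrow> c \<in> carrier G \<Longrightarrow>
    lam x (b \<otimes> c) = lam x b \<otimes> lam x c"
  using lam_hom by (simp add: hom_mult)

lemma lam_one [simp]: "x \<in> carrier G \<Longrightarrow> lam x \<one> = \<one>"
  using G.is_group lam_hom by (simp add: hom_one)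

lemma M_one_eq [simp]: "\<one>\<^bsub>M\<^esub> = \<one>"
proof -
  have one_M: "\<one>\<^bsub>M\<^esub> \<in> carrier G" using carrier_M M.one_closed by auto
  have "\<one> = \<one>\<^bsub>M\<^esub> \<otimes>\<^bsub>M\<^esub> \<one>" using carrier_M by simp
  also have "\<dots> = \<one>\<^bsub>M\<^esub>" using one_M by (simp add: M_mult_eq)
  finally show ?thesis ..
qed

lemma lam_M_mult:
  assumes x: "x \<in> carrier G" and y: "y \<in> carrier G" and b: "b \<in> carrier G"
  shows "lam (x \<otimes>\<^bsub>M\<^esub> y) b = lam x (lam y b)"
proof -
  have "(x \<otimes>\<^bsub>M\<^esub> y) \<otimes>\<^bsub>M\<^esub> b = x \<otimes>\<^bsub>M\<^esub> (y \<otimes>\<^bsub>M\<^esub> b)"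
    using x y b carrier_M by (simp add: M.m_assoc)
  also have "\<dots> = (x \<otimes> lam x y) \<otimes> lam x (lam y b)"
    using x y b by (simp add: M_mult_eq lam_mult G.m_assoc)
  also have "\<dots> = (x \<otimes>\<^bsub>M\<^esub> y) \<otimes> lam x (lam y b)"
    using x y by (simp add: M_mult_eq)
  finally show ?thesis
    using x y b by (simp add: brace_lambda_def G.m_assoc[symmetric])
qed

lemma lam_M_one [simp]: "b \<in> carrier G \<Longrightarrow> lam \<one> b = b"
  using carrier_M M.l_one[of b] by (simp add: brace_lambda_def)

lemma lam_M_inv_cancel:
  assumes "x \<in> carrier G" "b \<in> carrier G"
  shows "lam x (lam (inv\<^bsub>M\<^esub> x) b) = b" "lam (inv\<^bsub>M\<^esub> x) (lam x b) = b"
  using assms carrier_M by (simp_all flip: lam_M_mult)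

lemma M_inv_eq: "x \<in> carrier G \<Longrightarrow> inv\<^bsub>M\<^esub> x = lam (inv\<^bsub>M\<^esub> x) (inv x)"
proof -
  assume x: "x \<in> carrier G"
  have "x \<otimes> lam x (inv\<^bsub>M\<^esub> x) = \<one>"
    using x carrier_M by (simp flip: M_mult_eq)
  then have "lam x (inv\<^bsub>M\<^esub> x) = inv x"
    using x by (metis G.inv_equality G.m_comm M_inv_closed lam_closed)
  then show ?thesis
    using x carrier_M by (metis M.l_inv M_inv_closed M_one_eq lam_M_mult lam_M_one)
qed

definition lam_perm :: "'a \<Rightarrow> 'a \<Rightarrow> 'a" where
  "lam_perm x = (\<lambda>b\<in>carrier G. lam x b)"

lemma lam_perm_eq_iff: "lam_perm x = lam_perm y \<longleftrightarrow> (\<forall>b\<in>carrier G. lam x b = lam y b)"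
  unfolding lam_perm_def by (metis restrict_apply' restrict_ext)

lemma lam_perm_Bij: "x \<in> carrier G \<Longrightarrow> lam_perm x \<in> Bij (carrier G)"
  unfolding lam_perm_def Bij_def
  by (auto intro!: bij_betw_byWitness[where f' = "lam (inv\<^bsub>M\<^esub> x)"]
      simp: lam_M_inv_cancel)

lemma lam_perm_BijGroup_mult:
  assumes "x \<in> carrier G" "y \<in> carrier G"
  shows "lam_perm x \<otimes>\<^bsub>BijGroup (carrier G)\<^esub> lam_perm y = (\<lambda>b\<in>carrier G. lam x (lam y b))"
proof -
  have "lam_perm x \<otimes>\<^bsub>BijGroup (carrier G)\<^esub> lam_perm y = compose (carrier G) (lam_perm x) (lam_perm y)"
    using assms by (simp add: BijGroup_def lam_perm_Bij)
  also have "\<dots> = (\<lambda>b\<in>carrier G. lam x (lam y b))"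
    unfolding compose_def lam_perm_def using assms by (intro restrict_ext) simp
  finally show ?thesis .
qed

lemma lam_perm_hom_M: "lam_perm \<in> hom M (BijGroup (carrier G))"
proof (rule homI)
  fix x y assume "x \<in> carrier M" "y \<in> carrier M"
  then show "lam_perm (x \<otimes>\<^bsub>M\<^esub> y) = lam_perm x \<otimes>\<^bsub>BijGroup (carrier G)\<^esub> lam_perm y"
    using carrier_M
    by (subst lam_perm_BijGroup_mult) (auto simp: lam_perm_def lam_M_mult intro!: restrict_ext)
qed (use carrier_M lam_perm_Bij in \<open>simp add: BijGroup_def\<close>)

lemma lam_M_inv_cong:
  assumes "u \<in> carrier G" "v \<in> carrier G" "\<And>c. c \<in> carrier G \<Longrightarrow> lam u c = lam v c"
    and "b \<in> carrier G"
  shows "lam (inv\<^bsub>M\<^esub> u) b = lam (inv\<^bsub>M\<^esub> v) b"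
proof -
  have hom: "group_hom M (BijGroup (carrier G)) lam_perm"
    by (simp add: group_hom_def group_hom_axioms_def M.is_group group_BijGroup lam_perm_hom_M)
  have "lam_perm (inv\<^bsub>M\<^esub> u) = inv\<^bsub>BijGroup (carrier G)\<^esub> lam_perm u"
    and "lam_perm (inv\<^bsub>M\<^esub> v) = inv\<^bsub>BijGroup (carrier G)\<^esub> lam_perm v"
    using assms(1,2) carrier_M by (simp_all add: group_hom.hom_inv[OF hom])
  moreover have "lam_perm u = lam_perm v" using assms(3) by (simp add: lam_perm_eq_iff)
  ultimately have "lam_perm (inv\<^bsub>M\<^esub> u) = lam_perm (inv\<^bsub>M\<^esub> v)" by simp
  then show ?thesis using assms(4) unfolding lam_perm_eq_iff by blast
qed

end

section \<open>Left braces with A^(3) = 0\<close>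

locale brace3 = brace +
  assumes series_3: "brace_series G M 3 = {\<one>}"
begin

abbreviation A2 where "A2 \<equiv> brace_star_set G M (carrier G) (carrier G)"

lemma star_closed [simp]: "x \<in> carrier G \<Longrightarrow> y \<in> carrier G \<Longrightarrow> brace_star G M x y \<in> carrier G"
  by (simp add: brace_star_def)

lemma lam_eq_add_star: "x \<in> carrier G \<Longrightarrow> y \<in> carrier G \<Longrightarrow> lam x y = y \<otimes> brace_star G M x y"
  unfolding brace_star_def by (metis G.m_assoc G.r_inv G.l_one G.inv_closed lam_closed G.m_comm)

lemma A2_subgroup: "subgroup A2 G"
  unfolding brace_star_set_def by (rule G.generate_is_subgroup) auto

lemma star_in_A2: "x \<in> carrier G \<Longrightarrow> y \<in> carrier G \<Longrightarrow> brace_star G M x y \<in> A2"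
  unfolding brace_star_set_def by (rule generate.incl) auto

lemma lam_A2:
  assumes k: "k \<in> A2" and b: "b \<in> carrier G"
  shows "lam k b = b"
proof -
  have k_carrier: "k \<in> carrier G" using k A2_subgroup subgroup.subset by blast
  have "brace_series G M 3 = brace_star_set G M A2 (carrier G)" by (simp add: numeral_3_eq_3)
  then have "brace_star G M k b = \<one>"
    using series_3 k b unfolding brace_star_set_def by (blast intro: generate.incl)
  then show ?thesis
    using k_carrier b unfolding brace_star_def by (metis G.inv_closed G.inv_equality G.inv_inv lam_closed)
qed

lemma lam_add_A2:
  assumes u: "u \<in> carrier G" and k: "k \<in> A2" and b: "b \<in> carrier G"
  shows "lam (u \<otimes> k) b = lam u b"
proof -
  have k_carrier: "k \<in> carrier G" using k A2_subgroup subgroup.subset by blast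
  have "u \<otimes> k = k \<otimes>\<^bsub>M\<^esub> u" using k_carrier u by (simp add: M_mult_eq lam_A2[OF k] G.m_comm)
  then show ?thesis using k_carrier u b by (simp add: lam_M_mult lam_A2[OF k])
qed

lemma lam_add:
  assumes u: "u \<in> carrier G" and v: "v \<in> carrier G" and b: "b \<in> carrier G"
  shows "lam (u \<otimes> v) b = lam u (lam v b)"
proof -
  have "u \<otimes>\<^bsub>M\<^esub> v = (u \<otimes> v) \<otimes> brace_star G M u v"
    using u v by (simp add: M_mult_eq lam_eq_add_star G.m_assoc)
  then show ?thesis
    using u v b by (metis lam_add_A2 lam_M_mult G.m_closed star_in_A2)
qed

lemma lam_perm_hom_G: "lam_perm \<in> hom G (BijGroup (carrier G))"
proof (rule homI)
  fix x y assume "x \<in> carrier G" "y \<in> carrier G"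
  then show "lam_perm (x \<otimes> y) = lam_perm x \<otimes>\<^bsub>BijGroup (carrier G)\<^esub> lam_perm y"
    by (subst lam_perm_BijGroup_mult) (auto simp: lam_perm_def lam_add intro!: restrict_ext)
qed (simp add: BijGroup_def lam_perm_Bij)

lemma lam_M_int_pow:
  assumes x: "x \<in> carrier G" and b: "b \<in> carrier G"
  shows "lam (x [^]\<^bsub>M\<^esub> (n::int)) b = lam (x [^] n) b"
proof -
  have "lam_perm (x [^]\<^bsub>M\<^esub> n) = lam_perm x [^]\<^bsub>BijGroup (carrier G)\<^esub> n"
    using x carrier_M by (simp add: hom_int_pow lam_perm_hom_M group_BijGroup)
  also have "\<dots> = lam_perm (x [^] n)"
    using x by (simp add: hom_int_pow[OF lam_perm_hom_G] group_BijGroup G.is_group)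
  finally show ?thesis using x b by (simp add: lam_perm_eq_iff)
qed

end

section \<open>The subbrace generated by one element\<close>

locale brace3_element = brace3 +
  fixes a assumes a_closed [simp]: "a \<in> carrier G"
begin

abbreviation ai where "ai i \<equiv> lam (a [^]\<^bsub>M\<^esub> (i::int)) a"

abbreviation star_pow where "star_pow i \<equiv> brace_star G M (a [^]\<^bsub>M\<^esub> (i::int)) a"

abbreviation B where "B \<equiv> int_span G ai"

abbreviation D where "D \<equiv> zero_sum_span G ai"

lemma lam_M_int_pow_ai: "lam (a [^]\<^bsub>M\<^esub> n) (ai i) = ai (n + i)"
  using carrier_M by (simp add: lam_M_mult M.int_pow_mult)

lemma lam_M_int_pow_lincomb:
  "lam (a [^]\<^bsub>M\<^esub> n) (lincomb G ai x) = lincomb G ai (\<lambda>j. x (j - n))"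
  by (simp add: G.endomorphism_lincomb lam_hom lam_M_int_pow_ai G.lincomb_shift[of ai n x])

lemma lincomb_ai_eq:
  assumes "finite {i. x i \<noteq> 0}"
  shows "lincomb G ai x = a [^] coeff_sum x \<otimes> lincomb G star_pow x"
proof -
  have "lincomb G ai x = lincomb G (\<lambda>i. a \<otimes> star_pow i) x"
    by (simp add: lam_eq_add_star G.m_comm)
  then show ?thesis
    using assms by (simp add: G.lincomb_mult_family G.lincomb_const)
qed

lemma lam_lincomb:
  assumes "finite {i. x i \<noteq> 0}" "b \<in> carrier G"
  shows "lam (lincomb G ai x) b = lam (a [^]\<^bsub>M\<^esub> coeff_sum x) b"
proof -
  have "lincomb G star_pow x \<in> A2"
    by (simp add: G.lincomb_in_subgroup A2_subgroup star_in_A2)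
  then have "lam (lincomb G ai x) b = lam (a [^] coeff_sum x) b"
    using assms by (simp add: lincomb_ai_eq lam_add_A2)
  then show ?thesis
    using assms(2) by (simp add: lam_M_int_pow)
qed

lemma a_in_B: "a \<in> B"
proof -
  have "lincomb G ai (\<lambda>j. if j = 0 then 1 else 0) = a"
    using carrier_M by simp
  then show ?thesis
    unfolding int_span_def by (force intro!: exI[of _ "\<lambda>j. if j = 0 then 1 else 0"])
qed

lemma B_subgroup_G: "subgroup B G"
  by (simp add: G.int_span_subgroup)

lemma lam_M_int_pow_B:
  assumes "v \<in> B" shows "lam (a [^]\<^bsub>M\<^esub> (n::int)) v \<in> B"
proof -
  obtain x where x: "finite {i. x i \<noteq> 0}" "v = lincomb G ai x"
    using assms unfolding int_span_def by blast
  then show ?thesis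
    unfolding int_span_def using finite_support_shift[OF x(1), of n]
    by (force simp: lam_M_int_pow_lincomb)
qed

lemma B_subgroup_M: "subgroup B M"
proof
  show "B \<subseteq> carrier M" using B_subgroup_G subgroup.subset carrier_M by blast
  show "\<one>\<^bsub>M\<^esub> \<in> B" using B_subgroup_G subgroup.one_closed by fastforce
next
  fix u v assume u: "u \<in> B" and v: "v \<in> B"
  then obtain x where x: "finite {i. x i \<noteq> 0}" "u = lincomb G ai x"
    unfolding int_span_def by blast
  have v_carrier: "v \<in> carrier G" using v B_subgroup_G subgroup.subset by blast
  have "u \<otimes>\<^bsub>M\<^esub> v = u \<otimes> lam (a [^]\<^bsub>M\<^esub> coeff_sum x) v"
    using x v_carrier by (simp add: M_mult_eq lam_lincomb)
  then show "u \<otimes>\<^bsub>M\<^esub> v \<in> B"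
    using u lam_M_int_pow_B[OF v] subgroup.m_closed[OF B_subgroup_G] by simp
  have "inv\<^bsub>M\<^esub> u = lam (inv\<^bsub>M\<^esub> u) (inv u)"
    using x by (intro M_inv_eq) simp
  also have "\<dots> = lam (inv\<^bsub>M\<^esub> (a [^]\<^bsub>M\<^esub> coeff_sum x)) (inv u)"
    using x by (intro lam_M_inv_cong) (simp_all add: lam_lincomb)
  also have "\<dots> = lam (a [^]\<^bsub>M\<^esub> (- coeff_sum x)) (inv u)"
    using carrier_M by (simp add: M.int_pow_neg)
  finally show "inv\<^bsub>M\<^esub> u \<in> B"
    using lam_M_int_pow_B subgroup.m_inv_closed[OF B_subgroup_G u] by simp
qed

lemma B_eq_subbrace_generated: "B = subbrace_generated G M a"
proof
  show "subbrace_generated G M a \<subseteq> B"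
    unfolding subbrace_generated_def subbrace_def
    using B_subgroup_G B_subgroup_M a_in_B by blast
  have "B \<subseteq> S" if "subgroup S G" "subgroup S M" "a \<in> S" for S
  proof -
    have "ai i \<in> S" for i
      using that unfolding brace_lambda_def
      by (meson M.subgroup_int_pow_closed subgroup.m_closed subgroup.m_inv_closed)
    then show ?thesis
      unfolding int_span_def using that(1) by (auto intro: G.lincomb_in_subgroup)
  qed
  then show "B \<subseteq> subbrace_generated G M a"
    unfolding subbrace_generated_def subbrace_def by blast
qed

lemma star_in_D:
  assumes "u \<in> B" "v \<in> B"
  shows "brace_star G M u v \<in> D"
proof -
  obtain x y where x: "finite {i. x i \<noteq> 0}" "u = lincomb G ai x"
    and y: "finite {i. y i \<noteq> 0}" "v = lincomb G ai y"
    using assms unfolding int_span_def by blast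
  let ?y = "\<lambda>j. y (j - coeff_sum x)"
  let ?z = "\<lambda>j. ?y j + - y j"
  have fin_y: "finite {i. ?y i \<noteq> 0}" using y(1) by (rule finite_support_shift)
  have fin: "finite {i. ?z i \<noteq> 0}"
    using fin_y y(1) by (intro finite_support_add) simp_all
  have "brace_star G M u v = lincomb G ai ?y \<otimes> lincomb G ai (\<lambda>j. - y j)"
    unfolding brace_star_def using x y by (simp add: lam_lincomb lam_M_int_pow_lincomb G.lincomb_neg)
  also have "\<dots> = lincomb G ai ?z"
    using fin_y y(1) by (intro G.lincomb_add[symmetric]) simp_all
  finally have "brace_star G M u v = lincomb G ai ?z" .
  moreover have "coeff_sum ?z = 0"
    using coeff_sum_add[OF fin_y, of "\<lambda>j. - y j"] y(1) by (simp add: coeff_sum_neg coeff_sum_shift)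
  ultimately show ?thesis
    unfolding zero_sum_span_def using fin by blast
qed

lemma star_set_B_eq_D: "brace_star_set G M B B = D"
proof
  show "brace_star_set G M B B \<subseteq> D" unfolding brace_star_set_def
    by (rule G.generate_subgroup_incl[OF _ G.zero_sum_span_subgroup]) (auto simp: star_in_D)
  have "B \<subseteq> carrier G" using B_subgroup_G subgroup.subset by blast
  then have H: "subgroup (brace_star_set G M B B) G" unfolding brace_star_set_def
    by (intro G.generate_is_subgroup) (blast intro: star_closed)
  have "star_pow i \<in> brace_star_set G M B B" for i
    unfolding brace_star_set_def
    using M.subgroup_int_pow_closed[OF B_subgroup_M a_in_B] a_in_B by (blast intro: generate.incl)
  then have "lincomb G star_pow x \<in> brace_star_set G M B B" for x
    using H by (simp add: G.lincomb_in_subgroup)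
  then show "D \<subseteq> brace_star_set G M B B"
    unfolding zero_sum_span_def by (auto simp: lincomb_ai_eq)
qed

end

theorem theoremB:
  fixes G :: "('a, 'b) monoid_scheme" and M :: "('a, 'c) monoid_scheme" and a :: 'a
  assumes "left_brace G M"
    and "brace_series G M 3 = {\<one>\<^bsub>G\<^esub>}"
    and "a \<in> carrier G"
  defines "ai \<equiv> (\<lambda>i::int. brace_lambda G M (a [^]\<^bsub>M\<^esub> i) a)"
  defines "B \<equiv> {finprod G (\<lambda>i. ai i [^]\<^bsub>G\<^esub> x i) {i. x i \<noteq> 0} | x :: int \<Rightarrow> int.
                  finite {i. x i \<noteq> 0}}"
  defines "D \<equiv> {finprod G (\<lambda>i. ai i [^]\<^bsub>G\<^esub> x i) {i. x i \<noteq> 0} | x :: int \<Rightarrow> int.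
                  finite {i. x i \<noteq> 0} \<and> (\<Sum>i\<in>{i. x i \<noteq> 0}. x i) = 0}"
  shows "B = subbrace_generated G M a \<and> brace_star_set G M B B = D"
proof -
  interpret brace3_element G M a
    using assms(1-3)
    by (intro brace3_element.intro brace3.intro brace3_axioms.intro brace3_element_axioms.intro
        left_brace_imp_brace)
  have "B = int_span G ai" "D = zero_sum_span G ai"
    unfolding B_def D_def int_span_def zero_sum_span_def lincomb_def coeff_sum_def by simp_all
  then show ?thesis
    unfolding ai_def using B_eq_subbrace_generated star_set_B_eq_D by simp
qed

end
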